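(* Let $P,Q,R\in\mathbb P_d$. Then $$\operatorname{B}_R(P,Q)=\big\|\operatorname{Log}_R[P]-\operatorname{Log}_R[Q]\big\|_R^2,$$ where $\operatorname{Log}_R$ is the Bures–Wasserstein Riemannian logarithm at $R$ and $\|\cdot\|_R$ is the norm induced by the Bures–Wasserstein inner product on the tangent space at $R$.
   Context: $\mathbb P_d$ denotes the set of $d\times d$ complex positive definite matrices, $\mathbb H_d$ the Hermitian matrices. For $A,B\in\mathbb P_d$, the geometric mean is $A\#B:=A^{1/2}(A^{-1/2}BA^{-1/2})^{1/2}A^{1/2}$. The generalized fidelity between $P$ and $Q$ at base $R$ is $\operatorname{F}_R(P,Q):=\operatorname{Tr}\big[\sqrt{R^{1/2}PR^{1/2}}\,R^{-1}\sqrt{R^{1/2}QR^{1/2}}\big]$ (a complex number in general), and the squared generalized Bures distance is $\operatorname{B}_R(P,Q):=\operatorname{Tr}[P+Q]-2\,\mathrm{Re}\,\operatorname{F}_R(P,Q)$. For $R\in\mathbb P_d$ and $U\in\mathbb H_d$, $\mathcal L_R(U)$ denotes the unique solution $X$ of the Lyapunov equation $XR+RX=U$, and $\mathcal L_R^{-1}(Z):=ZR+RZ$. The Bures–Wasserstein inner product on $T_R\mathbb P_d\cong\mathbb H_d$ is $\langle U,V\rangle_R:=\operatorname{Tr}[\mathcal L_R(U)\,R\,\mathcal L_R(V)]$, with $\|U\|_R:=\sqrt{\langle U,U\rangle_R}$. The Bures–Wasserstein logarithm map is $\operatorname{Log}_R[P]:=\mathcal L_R^{-1}\big(R^{-1}\#P-\mathbb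 I\big)$. *)

theory Defs
  imports "HOL-Analysis.Analysis"
begin

definition adjoint_mat :: "complex^'d^'d \<Rightarrow> complex^'d^'d" where
  "adjoint_mat A = (\<chi> i j. cnj (A $ j $ i))"

definition hermitian :: "complex^'d^'d \<Rightarrow> bool" where
  "hermitian A \<longleftrightarrow> adjoint_mat A = A"

definition cinner :: "complex^'d \<Rightarrow> complex^'d \<Rightarrow> complex" where
  "cinner x y = (\<Sum>i\<in>UNIV. cnj (x $ i) * y $ i)"

definition pos_def :: "complex^'d^'d \<Rightarrow> bool" where
  "pos_def A \<longleftrightarrow> hermitian A \<and>
     (\<forall>x. x \<noteq> 0 \<longrightarrow> cinner x (A *v x) \<in> \<real> \<and> Re (cinner x (A *v x)) > 0)"

definition pos_semidef :: "complex^'d^'d \<Rightarrow> bool" where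
  "pos_semidef A \<longleftrightarrow> hermitian A \<and>
     (\<forall>x. cinner x (A *v x) \<in> \<real> \<and> Re (cinner x (A *v x)) \<ge> 0)"

definition msqrt :: "complex^'d^'d \<Rightarrow> complex^'d^'d" where
  "msqrt A = (THE X. pos_semidef X \<and> X ** X = A)"

definition geo_mean :: "complex^'d^'d \<Rightarrow> complex^'d^'d \<Rightarrow> complex^'d^'d" where
  "geo_mean A B = (let S = msqrt A; Si = matrix_inv S in S ** msqrt (Si ** B ** Si) ** S)"

definition gen_fidelity :: "complex^'d^'d \<Rightarrow> complex^'d^'d \<Rightarrow> complex^'d^'d \<Rightarrow> complex" where
  "gen_fidelity R P Q = (let S = msqrt R in
     trace (msqrt (S ** P ** S) ** matrix_inv R ** msqrt (S ** Q ** S)))"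

definition gen_bures :: "complex^'d^'d \<Rightarrow> complex^'d^'d \<Rightarrow> complex^'d^'d \<Rightarrow> complex" where
  "gen_bures R P Q = trace (P + Q) - 2 * complex_of_real (Re (gen_fidelity R P Q))"

definition lyap :: "complex^'d^'d \<Rightarrow> complex^'d^'d \<Rightarrow> complex^'d^'d" where
  "lyap R U = (THE X. X ** R + R ** X = U)"

definition lyap_inv :: "complex^'d^'d \<Rightarrow> complex^'d^'d \<Rightarrow> complex^'d^'d" where
  "lyap_inv R Z = Z ** R + R ** Z"

definition bw_inner :: "complex^'d^'d \<Rightarrow> complex^'d^'d \<Rightarrow> complex^'d^'d \<Rightarrow> complex" where
  "bw_inner R U V = trace (lyap R U ** R ** lyap R V)"

definition bw_norm :: "complex^'d^'d \<Rightarrow> complex^'d^'d \<Rightarrow> real" where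
  "bw_norm R U = sqrt (Re (bw_inner R U U))"

definition bw_log :: "complex^'d^'d \<Rightarrow> complex^'d^'d \<Rightarrow> complex^'d^'d" where
  "bw_log R P = lyap_inv R (geo_mean (matrix_inv R) P - mat 1)"

end

theory Submission
  imports Defs
begin

text \<open>Write \<open>G\<^sub>X = R\<^sup>-\<^sup>1 # X\<close>. The geometric mean is Hermitian and solves the Riccati equation
  \<open>G\<^sub>X R G\<^sub>X = X\<close>, and \<open>L\<^sub>R\<^sup>-\<^sup>1\<close> is linear, so \<open>Log\<^sub>R P - Log\<^sub>R Q = L\<^sub>R\<^sup>-\<^sup>1 (G\<^sub>P - G\<^sub>Q)\<close>,
  while \<open>\<parallel>L\<^sub>R\<^sup>-\<^sup>1 D\<parallel>\<^sub>R\<^sup>2 = tr (D R D)\<close> for Hermitian \<open>D\<close>. Expanding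
  \<open>tr ((G\<^sub>P - G\<^sub>Q) R (G\<^sub>P - G\<^sub>Q))\<close> gives \<open>tr P + tr Q - 2 Re tr (G\<^sub>Q R G\<^sub>P)\<close>, and
  conjugating by \<open>R\<^sup>1\<^sup>/\<^sup>2\<close> identifies \<open>tr (G\<^sub>Q R G\<^sub>P)\<close> with \<open>F\<^sub>R(P, Q)\<close>.
  The facts about positive definite matrices this needs (principal square roots, inverses,
  unique solvability of \<open>X R + R X = U\<close>) all follow from the spectral theorem, which is proved
  variationally: a maximiser of \<open>\<langle>x, A x\<rangle>\<close> on a unit sphere is an eigenvector.\<close>

lemma matrix_diff_ldistrib: "(A :: 'a::ring_1^'n^'m) ** (B - C) = A ** B - A ** C"
  by (simp add: matrix_matrix_mult_def vec_eq_iff sum_subtractf right_diff_distrib)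

lemma matrix_diff_rdistrib: "((A :: 'a::ring_1^'n^'m) - B) ** C = A ** C - B ** C"
  by (simp add: matrix_matrix_mult_def vec_eq_iff sum_subtractf left_diff_distrib)

lemma matrix_vector_mult_sum: "(A :: 'a::semiring_1^'n^'m) *v sum f S = (\<Sum>a\<in>S. A *v f a)"
  by (induction S rule: infinite_finite_induct) (auto simp: matrix_vector_right_distrib)

lemma sum_matrix_vector_mult: "(sum f S :: 'a::semiring_1^'n^'m) *v x = (\<Sum>a\<in>S. f a *v x)"
  by (induction S rule: infinite_finite_induct) (auto simp: matrix_vector_mult_add_rdistrib)

lemma scaleR_matrix_vector_mult: "(r *\<^sub>R (A :: complex^'d^'d)) *v x = r *\<^sub>R (A *v x)"
  by (simp add: vec_eq_iff matrix_vector_mult_def scaleR_sum_right)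

lemma scaleR_eq_scale_of_real: "r *\<^sub>R (x :: complex^'d) = complex_of_real r *s x"
  by (simp add: vec_eq_iff) (simp add: scaleR_conv_of_real)

lemma matrix_inv:
  assumes "invertible A"
  shows "A ** matrix_inv A = mat 1" and "matrix_inv A ** A = mat 1"
  using someI_ex[OF assms[unfolded invertible_def]] unfolding matrix_inv_def by auto

lemma matrix_inv_eqI:
  fixes A B :: "'a::field^'n^'n"
  assumes "A ** B = mat 1"
  shows "matrix_inv A = B"
proof -
  have "invertible A" using assms invertible_right_inverse by blast
  have "matrix_inv A = matrix_inv A ** (A ** B)" using assms by simp
  also have "\<dots> = (matrix_inv A ** A) ** B" by (simp add: matrix_mul_assoc)
  finally show ?thesis using matrix_inv(2)[OF \<open>invertible A\<close>] by simp
qed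

lemma invertible_matrix_inv: "invertible A \<Longrightarrow> invertible (matrix_inv A)"
  using matrix_inv unfolding invertible_def by blast

lemma matrix_inv_matrix_inv:
  fixes A :: "'a::field^'n^'n"
  shows "invertible A \<Longrightarrow> matrix_inv (matrix_inv A) = A"
  by (intro matrix_inv_eqI matrix_inv)

lemma matrix_inv_mult:
  fixes A B :: "'a::field^'n^'n"
  assumes "invertible A" "invertible B"
  shows "matrix_inv (A ** B) = matrix_inv B ** matrix_inv A"
proof (rule matrix_inv_eqI)
  have "A ** B ** (matrix_inv B ** matrix_inv A) = A ** (B ** matrix_inv B) ** matrix_inv A"
    by (simp add: matrix_mul_assoc)
  then show "A ** B ** (matrix_inv B ** matrix_inv A) = mat 1" using assms by (simp add: matrix_inv)
qed

lemma matrix_inv_square_sandwich: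
  fixes S :: "'a::field^'n^'n"
  assumes "invertible S"
  shows "S ** matrix_inv (S ** S) ** S = mat 1"
proof -
  have "S ** matrix_inv (S ** S) ** S = (S ** matrix_inv S) ** (matrix_inv S ** S)"
    using matrix_inv_mult[OF assms assms] by (simp add: matrix_mul_assoc)
  then show ?thesis using matrix_inv[OF assms] by simp
qed

section \<open>The Hermitian inner product\<close>

lemma cinner_add_right: "cinner x (y + z) = cinner x y + cinner x z"
  by (simp add: cinner_def sum.distrib distrib_left)

lemma cinner_add_left: "cinner (x + y) z = cinner x z + cinner y z"
  by (simp add: cinner_def sum.distrib distrib_right)

lemma cinner_diff_right: "cinner x (y - z) = cinner x y - cinner x z"
  by (simp add: cinner_def sum_subtractf right_diff_distrib)

lemma cinner_scale_right: "cinner x (c *s y) = c * cinner x y"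
  by (simp add: cinner_def sum_distrib_left mult_ac)

lemma cinner_scale_left: "cinner (c *s x) y = cnj c * cinner x y"
  by (simp add: cinner_def sum_distrib_left mult_ac)

lemma cinner_zero_left [simp]: "cinner 0 x = 0"
  by (simp add: cinner_def)

lemma cinner_zero_right [simp]: "cinner x 0 = 0"
  by (simp add: cinner_def)

lemma cinner_commute: "cinner y x = cnj (cinner x y)"
  by (simp add: cinner_def mult.commute)

lemma cinner_sum_right: "cinner x (sum f A) = (\<Sum>a\<in>A. cinner x (f a))"
  by (induction A rule: infinite_finite_induct) (auto simp: cinner_add_right)

lemma cinner_self: "cinner x x = complex_of_real ((norm x)\<^sup>2)"
proof -
  have "(norm x)\<^sup>2 = (\<Sum>i\<in>UNIV. (norm (x $ i))\<^sup>2)"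
    by (simp add: norm_vec_def L2_set_def sum_nonneg)
  moreover have "cnj (x $ i) * x $ i = complex_of_real ((norm (x $ i))\<^sup>2)" for i
    by (metis complex_norm_square mult.commute)
  ultimately show ?thesis
    by (simp add: cinner_def del: of_real_power)
qed

lemma inner_eq_Re_cinner: "inner x y = Re (cinner (x :: complex^'d) y)"
  by (simp add: inner_vec_def cinner_def inner_complex_def Re_sum)

lemma cinner_adjoint: "cinner x (A *v y) = cinner (adjoint_mat A *v x) y"
  unfolding cinner_def matrix_vector_mult_def adjoint_mat_def
  by (simp add: sum_distrib_left sum_distrib_right mult_ac) (rule sum.swap)

lemma cinner_hermitian: "hermitian A \<Longrightarrow> cinner x (A *v y) = cinner (A *v x) y"
  by (simp add: cinner_adjoint hermitian_def)

lemma adjoint_mult: "adjoint_mat (A ** B) = adjoint_mat B ** adjoint_mat (A :: complex^'d^'d)"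
  by (simp add: adjoint_mat_def matrix_matrix_mult_def vec_eq_iff mult.commute)

lemma adjoint_diff: "adjoint_mat (A - B) = adjoint_mat A - adjoint_mat (B :: complex^'d^'d)"
  by (simp add: adjoint_mat_def vec_eq_iff)

lemma trace_adjoint: "trace (adjoint_mat (A :: complex^'d^'d)) = cnj (trace A)"
  by (simp add: adjoint_mat_def trace_def)

lemma hermitian_diff: "hermitian A \<Longrightarrow> hermitian B \<Longrightarrow> hermitian (A - B)"
  by (simp add: hermitian_def adjoint_diff)

lemma hermitian_congruence: "hermitian A \<Longrightarrow> hermitian B \<Longrightarrow> hermitian (A ** B ** A)"
  unfolding hermitian_def by (simp add: adjoint_mult matrix_mul_assoc)

lemma cinner_congruence:
  "hermitian A \<Longrightarrow> cinner x ((A ** B ** A) *v x) = cinner (A *v x) (B *v (A *v x))"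
  by (simp add: cinner_hermitian matrix_vector_mul_assoc[symmetric])

lemma trace_congruence_diff:
  fixes A B R :: "complex^'d^'d"
  assumes "hermitian A" "hermitian B" "hermitian R"
  shows "trace ((A - B) ** R ** (A - B))
    = trace (A ** R ** A) + trace (B ** R ** B) - 2 * complex_of_real (Re (trace (B ** R ** A)))"
proof -
  have "A ** R ** B = adjoint_mat (B ** R ** A)"
    using assms by (simp add: hermitian_def adjoint_mult matrix_mul_assoc)
  then have "trace (A ** R ** B) = cnj (trace (B ** R ** A))" by (simp add: trace_adjoint)
  moreover have "trace ((A - B) ** R ** (A - B))
      = trace (A ** R ** A) - trace (B ** R ** A) - (trace (A ** R ** B) - trace (B ** R ** B))"
    by (simp only: matrix_diff_ldistrib matrix_diff_rdistrib trace_sub)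
  ultimately show ?thesis by (simp add: complex_eq_iff)
qed

section \<open>The spectral theorem\<close>

definition invariant_csubspace :: "complex^'d^'d \<Rightarrow> (complex^'d) set \<Rightarrow> bool" where
  "invariant_csubspace A W \<longleftrightarrow>
     (\<forall>x\<in>W. \<forall>y\<in>W. x + y \<in> W) \<and> (\<forall>c x. x \<in> W \<longrightarrow> c *s x \<in> W) \<and> (\<forall>x\<in>W. A *v x \<in> W)"

lemma cinner_quadratic_expand:
  "cinner (u + complex_of_real t *s w) (B *v (u + complex_of_real t *s w)) =
    cinner u (B *v u) + complex_of_real t * cinner u (B *v w) + complex_of_real t * cinner w (B *v u)
     + complex_of_real t * complex_of_real t * cinner w (B *v w)"
  by (simp add: matrix_vector_right_distrib vector_scalar_commute cinner_add_left
      cinner_add_right cinner_scale_left cinner_scale_right algebra_simps)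

text \<open>Along \<open>u + t B u\<close> the quadratic form is \<open>2 t |B u|\<^sup>2 + O(t\<^sup>2)\<close>, which is negative for
  small \<open>t < 0\<close> unless \<open>B u = 0\<close>.\<close>
lemma quadratic_form_zero_imp_kernel:
  fixes B :: "complex^'d^'d"
  assumes herm: "hermitian B" and W: "invariant_csubspace B W"
    and nonneg: "\<forall>y\<in>W. 0 \<le> Re (cinner y (B *v y))"
    and u: "u \<in> W" and zero: "Re (cinner u (B *v u)) = 0"
  shows "B *v u = 0"
proof (rule ccontr)
  assume ne: "B *v u \<noteq> 0"
  define w where "w = B *v u"
  have wW: "w \<in> W" using W u unfolding w_def invariant_csubspace_def by auto
  define a where "a = Re (cinner w w)"
  define c where "c = Re (cinner w (B *v w))"
  have a: "a > 0" using ne unfolding a_def w_def cinner_self by simp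
  have c: "c \<ge> 0" using nonneg wW c_def by auto
  have cross: "cinner u (B *v w) = cinner w w" "cinner w (B *v u) = cinner w w"
    using cinner_hermitian[OF herm] w_def by metis+
  have quad: "0 \<le> 2*t*a + t*t*c" for t
  proof -
    have "u + complex_of_real t *s w \<in> W" using W u wW unfolding invariant_csubspace_def by auto
    then have "0 \<le> Re (cinner (u + complex_of_real t *s w) (B *v (u + complex_of_real t *s w)))"
      using nonneg by auto
    also have "\<dots> = 2*t*a + t*t*c"
      using zero unfolding cinner_quadratic_expand cross by (simp add: a_def c_def)
    finally show ?thesis .
  qed
  define t where "t = - a / (c + 1)"
  have "0 \<le> (2*t*a + t*t*c) * ((c + 1) * (c + 1))" using quad[of t] c by simp
  also have "\<dots> = 2*a*(t*(c + 1))*(c + 1) + (t*(c + 1))*(t*(c + 1))*c" by (simp add: algebra_simps)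
  also have "t*(c + 1) = -a" unfolding t_def using c by simp
  finally have "a*a*(c + 2) \<le> 0" by (simp add: algebra_simps)
  moreover have "a*a*(c + 2) > 0" using a c by simp
  ultimately show False by simp
qed

lemma hermitian_shift: "hermitian A \<Longrightarrow> hermitian (\<mu> *\<^sub>R mat 1 - A)"
  unfolding hermitian_def by (simp add: adjoint_diff adjoint_mat_def vec_eq_iff mat_def)

lemma invariant_csubspace_shift:
  assumes "invariant_csubspace A W"
  shows "invariant_csubspace (\<mu> *\<^sub>R mat 1 - A) W"
proof -
  have "(\<mu> *\<^sub>R mat 1 - A) *v x = complex_of_real \<mu> *s x + (-1) *s (A *v x)" for x
    by (simp add: matrix_vector_mult_diff_rdistrib scaleR_matrix_vector_mult scaleR_eq_scale_of_real
        vec_eq_iff)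
  then show ?thesis using assms unfolding invariant_csubspace_def by metis
qed

text \<open>A maximiser \<open>u\<close> of the quadratic form on the unit sphere of \<open>W\<close> is an eigenvector:
  \<open>\<mu> I - A\<close> with \<open>\<mu> = \<langle>u, A u\<rangle>\<close> is positive semidefinite on \<open>W\<close> and vanishes at \<open>u\<close>.\<close>
lemma hermitian_max_eigenvector:
  fixes A :: "complex^'d^'d"
  assumes herm: "hermitian A" and W: "invariant_csubspace A W" and "closed W"
    and x0: "x0 \<in> W" "x0 \<noteq> 0"
  obtains u where "u \<in> W" "norm u = 1" "A *v u = complex_of_real (Re (cinner u (A *v u))) *s u"
proof -
  define f where "f y = Re (cinner y (A *v y))" for y
  define K where "K = W \<inter> sphere 0 1"
  have normalize: "(1 / norm y) *\<^sub>R y \<in> K" if "y \<in> W" "y \<noteq> 0" for y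
  proof -
    have "(1 / norm y) *\<^sub>R y \<in> W"
      using W that(1) scaleR_eq_scale_of_real unfolding invariant_csubspace_def by metis
    then show ?thesis using that(2) unfolding K_def by auto
  qed
  have "compact K" unfolding K_def using \<open>closed W\<close> by (intro closed_Int_compact) auto
  moreover have "continuous_on K f"
    unfolding f_def cinner_def matrix_vector_mult_def by (intro continuous_intros)
  ultimately obtain u where u: "u \<in> K" and umax: "\<forall>y\<in>K. f y \<le> f u"
    using continuous_attains_sup[of K f] normalize[OF x0] by blast
  define \<mu> where "\<mu> = f u"
  have bound: "f y \<le> \<mu> * (norm y)\<^sup>2" if "y \<in> W" for y
  proof (cases "y = 0")
    case False
    have "f ((1 / norm y) *\<^sub>R y) \<le> \<mu>" using umax normalize[OF that False] \<mu>_def by auto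
    moreover have "f ((1 / norm y) *\<^sub>R y) = f y / (norm y)\<^sup>2"
      unfolding f_def
      by (simp add: scaleR_eq_scale_of_real vector_scalar_commute cinner_scale_left
          cinner_scale_right power2_eq_square)
    ultimately show ?thesis using False by (simp add: field_simps)
  qed (simp add: f_def)
  define B where "B = \<mu> *\<^sub>R mat 1 - A"
  have Bv: "B *v y = complex_of_real \<mu> *s y - A *v y" for y
    unfolding B_def
    by (simp add: matrix_vector_mult_diff_rdistrib scaleR_matrix_vector_mult scaleR_eq_scale_of_real)
  have "Re (cinner y (B *v y)) = \<mu> * (norm y)\<^sup>2 - f y" for y
    by (simp add: Bv cinner_diff_right cinner_scale_right cinner_self f_def)
  then have "B *v u = 0"
    using u bound unfolding K_def \<mu>_def B_def
    by (intro quadratic_form_zero_imp_kernel[OF hermitian_shift[OF herm] invariant_csubspace_shift[OF W]])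
      auto
  then have "A *v u = complex_of_real \<mu> *s u" by (simp add: Bv)
  with u show ?thesis unfolding K_def \<mu>_def f_def by (intro that[of u]) auto
qed

definition orthonormal :: "(complex^'d) set \<Rightarrow> bool" where
  "orthonormal S \<longleftrightarrow> (\<forall>v\<in>S. \<forall>w\<in>S. cinner v w = (if v = w then 1 else 0))"

definition orthonormal_basis :: "(complex^'d) set \<Rightarrow> bool" where
  "orthonormal_basis S \<longleftrightarrow> orthonormal S \<and> (\<forall>x. (\<forall>v\<in>S. cinner v x = 0) \<longrightarrow> x = 0)"

lemma orthonormal_finite_card:
  fixes S :: "(complex^'d) set"
  assumes "orthonormal S"
  shows "finite S \<and> card S \<le> DIM(complex^'d)"
proof -
  have "pairwise orthogonal S" using assms
    by (auto simp: pairwise_def orthogonal_def inner_eq_Re_cinner orthonormal_def)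
  moreover have "0 \<notin> S" using assms unfolding orthonormal_def by force
  ultimately show ?thesis using independent_bound pairwise_orthogonal_independent by blast
qed

lemma orthonormal_insert:
  assumes "orthonormal S" "cinner u u = 1" "\<forall>w\<in>S. cinner w u = 0"
  shows "orthonormal (insert u S)"
proof -
  have "\<forall>w\<in>S. cinner u w = 0" using assms(3) cinner_commute[of u] by auto
  moreover have "u \<notin> S" using assms(2,3) by auto
  ultimately show ?thesis using assms unfolding orthonormal_def by auto
qed

lemma invariant_csubspace_orthogonal_complement:
  assumes herm: "hermitian A" and eig: "\<forall>v\<in>S. \<exists>c. A *v v = c *s v"
  shows "invariant_csubspace A {y. \<forall>v\<in>S. cinner v y = 0}"
proof -
  have "cinner v (A *v x) = 0" if "v \<in> S" "\<forall>v\<in>S. cinner v x = 0" for v x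
  proof -
    from bspec[OF eig that(1)] obtain c where "A *v v = c *s v" ..
    then have "cinner v (A *v x) = cnj c * cinner v x"
      using cinner_hermitian[OF herm, of v x] by (simp add: cinner_scale_left)
    then show ?thesis using that by simp
  qed
  then show ?thesis
    unfolding invariant_csubspace_def by (simp add: cinner_add_right cinner_scale_right)
qed

lemma closed_orthogonal_complement: "closed {y :: complex^'d. \<forall>v\<in>S. cinner v y = 0}"
proof -
  have "closed {y :: complex^'d. cinner v y = 0}" for v
    unfolding cinner_def by (intro closed_Collect_eq continuous_intros)
  moreover have "{y. \<forall>v\<in>S. cinner v y = 0} = (\<Inter>v\<in>S. {y. cinner v y = 0})" by auto
  ultimately show ?thesis by auto
qed

text \<open>Spectral theorem: a maximal orthonormal family of eigenvectors spans, since otherwise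
  the orthogonal complement would be a nonzero invariant subspace containing a further eigenvector.\<close>
lemma hermitian_eigenbasis:
  fixes A :: "complex^'d^'d"
  assumes herm: "hermitian A"
  obtains S where "orthonormal_basis S"
    "\<forall>v\<in>S. A *v v = complex_of_real (Re (cinner v (A *v v))) *s v"
proof -
  define E where "E T \<longleftrightarrow> orthonormal T \<and>
    (\<forall>v\<in>T. A *v v = complex_of_real (Re (cinner v (A *v v))) *s v)" for T
  have "E {}" by (simp add: E_def orthonormal_def)
  moreover have "\<forall>T. E T \<longrightarrow> card T < DIM(complex^'d) + 1"
    using orthonormal_finite_card unfolding E_def by fastforce
  ultimately obtain S where S: "E S" and max: "\<forall>T. E T \<longrightarrow> card T \<le> card S"
    using ex_has_greatest_nat[of E "{}" card] by blast
  have "x = 0" if perp: "\<forall>v\<in>S. cinner v x = 0" for x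
  proof (rule ccontr)
    assume "x \<noteq> 0"
    define W where "W = {y. \<forall>v\<in>S. cinner v y = 0}"
    have "invariant_csubspace A W"
      unfolding W_def using S herm unfolding E_def by (intro invariant_csubspace_orthogonal_complement) auto
    then obtain u where u: "u \<in> W" "norm u = 1"
        "A *v u = complex_of_real (Re (cinner u (A *v u))) *s u"
      using hermitian_max_eigenvector[OF herm _ _, of W x] closed_orthogonal_complement
        perp \<open>x \<noteq> 0\<close> unfolding W_def by blast
    have uu: "cinner u u = 1" using u(2) by (simp add: cinner_self)
    then have "u \<notin> S" using u(1) unfolding W_def by auto
    have "E (insert u S)"
      using S u uu orthonormal_insert unfolding E_def W_def by auto
    then have "card (insert u S) \<le> card S" using max by blast
    moreover have "finite S" using S orthonormal_finite_card unfolding E_def by blast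
    ultimately show False using \<open>u \<notin> S\<close> by simp
  qed
  with S show ?thesis unfolding E_def by (intro that[of S]) (auto simp: orthonormal_basis_def)
qed

definition outer :: "complex^'d \<Rightarrow> complex^'d^'d" where
  "outer v = (\<chi> i j. v $ i * cnj (v $ j))"

text \<open>Functional calculus: square roots and inverses of a positive definite matrix are obtained
  by transforming the eigenvalue function \<open>h\<close>.\<close>
definition spectral_mat :: "(complex^'d) set \<Rightarrow> (complex^'d \<Rightarrow> real) \<Rightarrow> complex^'d^'d" where
  "spectral_mat S h = (\<Sum>v\<in>S. h v *\<^sub>R outer v)"

lemma outer_mult_vec: "outer v *v x = cinner v x *s v"
  by (simp add: outer_def matrix_vector_mult_def cinner_def vec_eq_iff sum_distrib_left mult_ac)

lemma spectral_mat_mult_vec: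
  "spectral_mat S h *v x = (\<Sum>v\<in>S. (complex_of_real (h v) * cinner v x) *s v)"
  unfolding spectral_mat_def sum_matrix_vector_mult
  by (simp add: scaleR_matrix_vector_mult outer_mult_vec scaleR_eq_scale_of_real vec_eq_iff mult_ac)

lemma hermitian_spectral_mat: "hermitian (spectral_mat S h)"
proof -
  have "spectral_mat S h $ i $ j = (\<Sum>v\<in>S. complex_of_real (h v) * (v $ i * cnj (v $ j)))" for i j
    unfolding spectral_mat_def by (simp add: outer_def) (simp add: scaleR_conv_of_real)
  then show ?thesis unfolding hermitian_def adjoint_mat_def by (simp add: vec_eq_iff mult_ac)
qed

lemma spectral_mat_cong: "(\<And>v. v \<in> S \<Longrightarrow> g v = h v) \<Longrightarrow> spectral_mat S g = spectral_mat S h"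
  unfolding spectral_mat_def by (rule sum.cong) auto

lemma cinner_orthonormal_sum:
  assumes "orthonormal S" "v \<in> S"
  shows "cinner v (\<Sum>w\<in>S. c w *s w) = c v"
proof -
  have "cinner v (\<Sum>w\<in>S. c w *s w) = (\<Sum>w\<in>S. c w * (if v = w then 1 else 0))"
    using assms unfolding orthonormal_def by (simp add: cinner_sum_right cinner_scale_right)
  also have "\<dots> = c v"
    using assms orthonormal_finite_card[of S] by (simp add: if_distrib cong: if_cong)
  finally show ?thesis .
qed

lemma orthonormal_basis_expansion:
  assumes "orthonormal_basis S"
  shows "x = (\<Sum>v\<in>S. cinner v x *s v)"
proof -
  define r where "r = x - (\<Sum>v\<in>S. cinner v x *s v)"
  have "orthonormal S" using assms unfolding orthonormal_basis_def by blast
  then have "\<forall>w\<in>S. cinner w r = 0"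
    unfolding r_def by (simp add: cinner_diff_right cinner_orthonormal_sum)
  then have "r = 0" using assms unfolding orthonormal_basis_def by blast
  then show ?thesis unfolding r_def by simp
qed

lemma spectral_mat_eqI:
  assumes "orthonormal_basis S" "\<forall>v\<in>S. A *v v = complex_of_real (h v) *s v"
  shows "A = spectral_mat S h"
proof -
  have "A *v x = spectral_mat S h *v x" for x
  proof -
    have "A *v x = A *v (\<Sum>v\<in>S. cinner v x *s v)"
      using orthonormal_basis_expansion[OF assms(1)] by metis
    also have "\<dots> = (\<Sum>v\<in>S. cinner v x *s (A *v v))"
      by (simp add: matrix_vector_mult_sum vector_scalar_commute)
    also have "\<dots> = spectral_mat S h *v x"
      unfolding spectral_mat_mult_vec using assms(2) by (intro sum.cong) (auto simp: vec_eq_iff)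
    finally show ?thesis .
  qed
  then show ?thesis by (simp add: matrix_eq)
qed

lemma spectral_mat_mult:
  assumes "orthonormal S"
  shows "spectral_mat S g ** spectral_mat S h = spectral_mat S (\<lambda>v. g v * h v)"
proof -
  have "spectral_mat S g *v (spectral_mat S h *v x) = spectral_mat S (\<lambda>v. g v * h v) *v x" for x
    unfolding spectral_mat_mult_vec[of S g] spectral_mat_mult_vec[of S "\<lambda>v. g v * h v"]
    by (intro sum.cong refl)
      (simp add: spectral_mat_mult_vec cinner_orthonormal_sum[OF assms] mult_ac)
  then show ?thesis by (simp add: matrix_eq matrix_vector_mul_assoc)
qed

lemma spectral_mat_one: "orthonormal_basis S \<Longrightarrow> spectral_mat S (\<lambda>v. 1) = mat 1"
  by (rule spectral_mat_eqI[symmetric]) auto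

lemma cinner_spectral_mat:
  "cinner x (spectral_mat S h *v x) = complex_of_real (\<Sum>v\<in>S. h v * (cmod (cinner v x))\<^sup>2)"
proof -
  have "cinner v x * cinner x v = complex_of_real ((cmod (cinner v x))\<^sup>2)" for v
    using complex_norm_square[of "cinner v x"] cinner_commute[of x v] by simp
  then show ?thesis
    unfolding spectral_mat_mult_vec by (simp add: cinner_sum_right cinner_scale_right mult.assoc)
qed

lemma hermitian_spectral_decomposition:
  assumes "hermitian A"
  obtains S l where "orthonormal_basis S" "A = spectral_mat S l"
    "\<forall>v\<in>S. A *v v = complex_of_real (l v) *s v"
proof -
  obtain S where S: "orthonormal_basis S"
    and eig: "\<forall>v\<in>S. A *v v = complex_of_real (Re (cinner v (A *v v))) *s v"
    using hermitian_eigenbasis[OF assms] by blast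
  show ?thesis by (rule that[OF S spectral_mat_eqI[OF S eig] eig])
qed

section \<open>Positive definite matrices\<close>

lemma pos_def_hermitian: "pos_def A \<Longrightarrow> hermitian A"
  by (simp add: pos_def_def)

lemma pos_def_imp_pos_semidef: "pos_def A \<Longrightarrow> pos_semidef A"
  unfolding pos_def_def pos_semidef_def
  by (metis less_eq_real_def cinner_zero_left zero_complex.simps(1) Reals_0)

lemma pos_def_spectral_mat:
  fixes S :: "(complex^'d) set"
  assumes "orthonormal_basis S" "\<forall>v\<in>S. h v > 0"
  shows "pos_def (spectral_mat S h)"
  unfolding pos_def_def
proof (rule conjI[OF hermitian_spectral_mat], intro allI impI)
  fix x :: "complex^'d" assume "x \<noteq> 0"
  then obtain v where v: "v \<in> S" "cinner v x \<noteq> 0" using assms(1) orthonormal_basis_def by blast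
  have "0 < h v * (cmod (cinner v x))\<^sup>2" using v assms(2) by simp
  also have "\<dots> \<le> (\<Sum>v\<in>S. h v * (cmod (cinner v x))\<^sup>2)"
    using v assms orthonormal_finite_card unfolding orthonormal_basis_def
    by (intro member_le_sum) (auto simp: less_imp_le)
  finally show "cinner x (spectral_mat S h *v x) \<in> \<real> \<and> 0 < Re (cinner x (spectral_mat S h *v x))"
    unfolding cinner_spectral_mat by simp
qed

lemma pos_def_spectral_decomposition:
  assumes "pos_def A"
  obtains S l where "orthonormal_basis S" "A = spectral_mat S l" "\<forall>v\<in>S. l v > 0"
    "\<forall>v\<in>S. A *v v = complex_of_real (l v) *s v"
proof -
  obtain S l where S: "orthonormal_basis S" "A = spectral_mat S l"
    and eig: "\<forall>v\<in>S. A *v v = complex_of_real (l v) *s v"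
    using hermitian_spectral_decomposition[OF pos_def_hermitian[OF assms]] by blast
  have "l v > 0" if "v \<in> S" for v
  proof -
    have "cinner v v = 1" using S(1) that unfolding orthonormal_basis_def orthonormal_def by auto
    then have "cinner v (A *v v) = complex_of_real (l v)" using eig that by (simp add: cinner_scale_right)
    moreover have "v \<noteq> 0" using \<open>cinner v v = 1\<close> by auto
    ultimately show ?thesis using assms unfolding pos_def_def by force
  qed
  then show ?thesis using S eig that by blast
qed

lemma pos_def_inverse:
  assumes "pos_def A"
  shows "invertible A" and "pos_def (matrix_inv A)"
proof -
  obtain S l where S: "orthonormal_basis S" "A = spectral_mat S l" "\<forall>v\<in>S. l v > 0"
    using pos_def_spectral_decomposition[OF assms] by blast
  define Y where "Y = spectral_mat S (\<lambda>v. inverse (l v))"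
  have "A ** Y = spectral_mat S (\<lambda>v. 1)"
    unfolding Y_def S(2) using S(1,3) unfolding orthonormal_basis_def
    by (subst spectral_mat_mult) (auto intro!: spectral_mat_cong)
  then have AY: "A ** Y = mat 1" using spectral_mat_one[OF S(1)] by simp
  then show "invertible A" using invertible_right_inverse by blast
  have "pos_def Y" unfolding Y_def using S by (intro pos_def_spectral_mat) auto
  then show "pos_def (matrix_inv A)" using matrix_inv_eqI[OF AY] by simp
qed

lemma pos_def_sqrt_exists:
  assumes "pos_def A"
  shows "\<exists>X. pos_def X \<and> X ** X = A"
proof -
  obtain S l where S: "orthonormal_basis S" "A = spectral_mat S l" "\<forall>v\<in>S. l v > 0"
    using pos_def_spectral_decomposition[OF assms] by blast
  define X where "X = spectral_mat S (\<lambda>v. sqrt (l v))"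
  have "pos_def X" unfolding X_def using S by (intro pos_def_spectral_mat) auto
  moreover have "X ** X = A"
    unfolding X_def S(2) using S(1,3) unfolding orthonormal_basis_def
    by (subst spectral_mat_mult) (auto intro!: spectral_mat_cong simp: less_imp_le)
  ultimately show ?thesis by blast
qed

lemma pos_semidef_quadratic_zero_imp_kernel:
  assumes "pos_semidef A" "Re (cinner u (A *v u)) = 0"
  shows "A *v u = 0"
  using assms unfolding pos_semidef_def
  by (intro quadratic_form_zero_imp_kernel[of A UNIV]) (auto simp: invariant_csubspace_def)

text \<open>From \<open>X\<^sup>2 - Y\<^sup>2 = X (X - Y) + (X - Y) Y\<close>: an eigenvalue \<open>m \<noteq> 0\<close> of \<open>X - Y\<close> with
  eigenvector \<open>v\<close> would force \<open>\<langle>v, X v\<rangle> + \<langle>v, Y v\<rangle> = 0\<close>, hence \<open>X v = Y v = 0\<close>.\<close>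
lemma pos_semidef_sqrt_diff_eigenvalue:
  assumes X: "pos_semidef X" and Y: "pos_semidef Y" and sq: "X ** X = Y ** Y"
    and eig: "(X - Y) *v v = complex_of_real m *s v" and "v \<noteq> 0"
  shows "m = 0"
proof (rule ccontr)
  assume "m \<noteq> 0"
  have hXY: "hermitian (X - Y)"
    using X Y unfolding pos_semidef_def by (auto intro: hermitian_diff)
  have "X ** (X - Y) + (X - Y) ** Y = 0"
    using sq by (simp add: matrix_diff_ldistrib matrix_diff_rdistrib matrix_mul_assoc)
  then have "0 = cinner v ((X ** (X - Y) + (X - Y) ** Y) *v v)" by simp
  also have "\<dots> = cinner v (X *v ((X - Y) *v v)) + cinner ((X - Y) *v v) (Y *v v)"
    using cinner_hermitian[OF hXY, of v "Y *v v"]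
    by (simp add: matrix_vector_mult_add_rdistrib cinner_add_right matrix_vector_mul_assoc)
  also have "\<dots> = complex_of_real m * (cinner v (X *v v) + cinner v (Y *v v))"
    unfolding eig by (simp add: vector_scalar_commute cinner_scale_left cinner_scale_right algebra_simps)
  finally have "Re (cinner v (X *v v) + cinner v (Y *v v)) = 0"
    using \<open>m \<noteq> 0\<close> by simp
  moreover have "Re (cinner v (X *v v)) \<ge> 0" "Re (cinner v (Y *v v)) \<ge> 0"
    using X Y unfolding pos_semidef_def by auto
  ultimately have "X *v v = 0" "Y *v v = 0"
    using X Y by (auto intro: pos_semidef_quadratic_zero_imp_kernel)
  then have "complex_of_real m *s v = 0" using eig by (simp add: matrix_vector_mult_diff_rdistrib)
  then show False using \<open>m \<noteq> 0\<close> \<open>v \<noteq> 0\<close> by (simp add: vec_eq_iff)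
qed

lemma pos_semidef_sqrt_unique:
  assumes X: "pos_semidef X" and Y: "pos_semidef Y" and sq: "X ** X = Y ** Y"
  shows "X = Y"
proof -
  have "hermitian (X - Y)"
    using X Y unfolding pos_semidef_def by (auto intro: hermitian_diff)
  then obtain S l where S: "orthonormal_basis S" "X - Y = spectral_mat S l"
    and eig: "\<forall>v\<in>S. (X - Y) *v v = complex_of_real (l v) *s v"
    by (rule hermitian_spectral_decomposition)
  have "v \<noteq> 0" if "v \<in> S" for v
    using S(1) that unfolding orthonormal_basis_def orthonormal_def by force
  then have "X - Y = spectral_mat S (\<lambda>v. 0)"
    unfolding S(2) using eig pos_semidef_sqrt_diff_eigenvalue[OF X Y sq]
    by (intro spectral_mat_cong) blast
  then show ?thesis by (simp add: spectral_mat_def)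
qed

lemma msqrt_square: "pos_semidef X \<Longrightarrow> msqrt (X ** X) = X"
  unfolding msqrt_def using pos_semidef_sqrt_unique by (intro the_equality) auto

lemma pos_def_msqrt:
  assumes "pos_def A"
  shows "pos_def (msqrt A)" and "msqrt A ** msqrt A = A"
proof -
  obtain X where "pos_def X" "X ** X = A" using pos_def_sqrt_exists[OF assms] by blast
  moreover from this have "msqrt A = X" using msqrt_square pos_def_imp_pos_semidef by blast
  ultimately show "pos_def (msqrt A)" "msqrt A ** msqrt A = A" by simp_all
qed

lemma msqrt_matrix_inv:
  assumes "pos_def A"
  shows "msqrt (matrix_inv A) = matrix_inv (msqrt A)"
proof -
  have "invertible (msqrt A)" "pos_def (matrix_inv (msqrt A))"
    using pos_def_inverse pos_def_msqrt(1)[OF assms] by blast+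
  moreover have "matrix_inv A = matrix_inv (msqrt A) ** matrix_inv (msqrt A)"
    using matrix_inv_mult[OF calculation(1,1)] pos_def_msqrt(2)[OF assms] by simp
  ultimately show ?thesis using msqrt_square pos_def_imp_pos_semidef by metis
qed

lemma pos_def_congruence:
  fixes P T :: "complex^'d^'d"
  assumes P: "pos_def P" and T: "hermitian T" "invertible T"
  shows "pos_def (T ** P ** T)"
  unfolding pos_def_def
proof (rule conjI[OF hermitian_congruence[OF T(1) pos_def_hermitian[OF P]]], intro allI impI)
  fix x :: "complex^'d" assume "x \<noteq> 0"
  then have "T *v x \<noteq> 0"
    using inj_matrix_vector_mult[OF T(2)] by (metis injD matrix_vector_mult_0_right)
  then show "cinner x ((T ** P ** T) *v x) \<in> \<real> \<and> 0 < Re (cinner x ((T ** P ** T) *v x))"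
    unfolding cinner_congruence[OF T(1)] using P pos_def_def by blast
qed

lemma pos_def_congruence_matrix_inv:
  "pos_def A \<Longrightarrow> pos_def B \<Longrightarrow> pos_def (matrix_inv A ** B ** matrix_inv A)"
  using pos_def_congruence pos_def_hermitian pos_def_inverse invertible_matrix_inv by metis

lemma pos_semidef_congruence:
  fixes D R :: "complex^'d^'d"
  assumes "pos_semidef R" "hermitian D"
  shows "pos_semidef (D ** R ** D)"
  using assms hermitian_congruence[OF assms(2)] cinner_congruence[OF assms(2)]
  unfolding pos_semidef_def by auto

lemma trace_pos_semidef:
  fixes A :: "complex^'d^'d"
  assumes "pos_semidef A"
  shows "trace A = complex_of_real (Re (trace A))" and "Re (trace A) \<ge> 0"
proof -
  have diag: "A $ i $ i = cinner (axis i 1) (A *v axis i 1)" for i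
    by (simp add: cinner_def matrix_vector_mult_def axis_def if_distrib if_distribR cong: if_cong)
  then have "A $ i $ i \<in> \<real>" "Re (A $ i $ i) \<ge> 0" for i
    using assms unfolding pos_semidef_def by metis+
  then show "trace A = complex_of_real (Re (trace A))" "Re (trace A) \<ge> 0"
    unfolding trace_def by (auto intro: sum_nonneg simp: Re_sum complex_is_Real_iff)
qed

section \<open>The Lyapunov equation\<close>

text \<open>For an eigenpair \<open>(\<lambda>, v)\<close> of \<open>R\<close>, the equation gives \<open>R (Z v) = - \<lambda> Z v\<close>,
  which positivity of \<open>R\<close> only allows for \<open>Z v = 0\<close>.\<close>
lemma lyapunov_homogeneous_eq_zero:
  fixes R Z :: "complex^'d^'d"
  assumes R: "pos_def R" and eq: "Z ** R + R ** Z = 0"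
  shows "Z = 0"
proof -
  obtain S l where S: "orthonormal_basis S" and pos: "\<forall>v\<in>S. l v > 0"
    and eig: "\<forall>v\<in>S. R *v v = complex_of_real (l v) *s v"
    using pos_def_spectral_decomposition[OF R] by blast
  have kernel: "Z *v v = 0" if "v \<in> S" for v
  proof (rule ccontr)
    define w where "w = Z *v v"
    assume "Z *v v \<noteq> 0"
    then have "w \<noteq> 0" by (simp add: w_def)
    have "Z *v (R *v v) + R *v w = 0"
      using arg_cong[OF eq, of "\<lambda>M. M *v v"]
      by (simp add: matrix_vector_mult_add_rdistrib matrix_vector_mul_assoc w_def)
    then have Rw: "R *v w = complex_of_real (- l v) *s w"
      using eig that by (simp add: vector_scalar_commute w_def add_eq_0_iff2 vec_eq_iff)
    have "Re (cinner w (R *v w)) = - l v * (norm w)\<^sup>2"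
      unfolding Rw cinner_scale_right cinner_self by simp
    moreover have "Re (cinner w (R *v w)) > 0" using R \<open>w \<noteq> 0\<close> unfolding pos_def_def by blast
    moreover have "l v * (norm w)\<^sup>2 \<ge> 0" using pos that by (simp add: less_imp_le)
    ultimately show False by linarith
  qed
  have "Z *v x = 0 *v x" for x
  proof -
    have "Z *v x = Z *v (\<Sum>v\<in>S. cinner v x *s v)"
      using orthonormal_basis_expansion[OF S, of x] by simp
    also have "\<dots> = 0" using kernel by (simp add: matrix_vector_mult_sum vector_scalar_commute)
    finally show ?thesis by simp
  qed
  then show ?thesis by (simp add: matrix_eq)
qed

lemma lyap_lyap_inv:
  fixes R X :: "complex^'d^'d"
  assumes "pos_def R"
  shows "lyap R (lyap_inv R X) = X"
  unfolding lyap_def lyap_inv_def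
proof (rule the_equality)
  fix Y assume "Y ** R + R ** Y = X ** R + R ** X"
  then have "(Y - X) ** R + R ** (Y - X) = 0"
    by (simp add: matrix_diff_ldistrib matrix_diff_rdistrib algebra_simps)
  then have "Y - X = 0" by (rule lyapunov_homogeneous_eq_zero[OF assms])
  then show "Y = X" by simp
qed simp

lemma lyap_inv_diff: "lyap_inv R X - lyap_inv R Y = lyap_inv R (X - Y)"
  by (simp add: lyap_inv_def matrix_diff_ldistrib matrix_diff_rdistrib algebra_simps)

lemma bw_norm_lyap_inv:
  assumes "pos_def R" "hermitian D"
  shows "complex_of_real ((bw_norm R (lyap_inv R D))\<^sup>2) = trace (D ** R ** D)"
proof -
  have "pos_semidef (D ** R ** D)"
    using pos_semidef_congruence pos_def_imp_pos_semidef assms by blast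
  note trace = trace_pos_semidef[OF this]
  have "(bw_norm R (lyap_inv R D))\<^sup>2 = Re (trace (D ** R ** D))"
    unfolding bw_norm_def bw_inner_def lyap_lyap_inv[OF assms(1)] using trace(2) by simp
  then show ?thesis using trace(1) by simp
qed

section \<open>The geometric mean\<close>

lemma pos_def_geo_mean:
  assumes "pos_def A" "pos_def B"
  shows "pos_def (geo_mean A B)"
proof -
  have "pos_def (msqrt A)" using pos_def_msqrt assms(1) by blast
  moreover have "pos_def (msqrt (matrix_inv (msqrt A) ** B ** matrix_inv (msqrt A)))"
    using pos_def_msqrt pos_def_congruence_matrix_inv calculation assms(2) by blast
  ultimately show ?thesis
    unfolding geo_mean_def Let_def
    using pos_def_congruence pos_def_hermitian pos_def_inverse by blast
qed

lemma geo_mean_riccati: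
  assumes A: "pos_def A" and B: "pos_def B"
  shows "geo_mean A B ** matrix_inv A ** geo_mean A B = B"
proof -
  define S where "S = msqrt A"
  define Si where "Si = matrix_inv S"
  define M where "M = msqrt (Si ** B ** Si)"
  have "invertible S" using pos_def_inverse pos_def_msqrt A unfolding S_def by blast
  have SAS: "S ** matrix_inv A ** S = mat 1"
    using matrix_inv_square_sandwich[OF \<open>invertible S\<close>] pos_def_msqrt(2)[OF A] by (simp add: S_def)
  have M: "M ** M = Si ** B ** Si"
    using pos_def_msqrt(2) pos_def_congruence_matrix_inv pos_def_msqrt(1) A B
    unfolding M_def Si_def S_def by blast
  have "geo_mean A B ** matrix_inv A ** geo_mean A B = S ** M ** (S ** matrix_inv A ** S) ** M ** S"
    unfolding geo_mean_def Let_def S_def[symmetric] Si_def[symmetric] M_def[symmetric]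
    by (simp add: matrix_mul_assoc)
  also have "\<dots> = S ** (M ** M) ** S" using SAS by (simp add: matrix_mul_assoc)
  also have "\<dots> = (S ** Si) ** B ** (Si ** S)" using M by (simp add: matrix_mul_assoc)
  also have "\<dots> = B" using matrix_inv[OF \<open>invertible S\<close>] by (simp add: Si_def)
  finally show ?thesis .
qed

lemma trace_geo_mean_eq_gen_fidelity:
  assumes R: "pos_def R"
  shows "trace (geo_mean (matrix_inv R) Q ** R ** geo_mean (matrix_inv R) P) = gen_fidelity R P Q"
proof -
  define S where "S = msqrt (matrix_inv R)"
  define MP where "MP = msqrt (matrix_inv S ** P ** matrix_inv S)"
  define MQ where "MQ = msqrt (matrix_inv S ** Q ** matrix_inv S)"
  have Ri: "pos_def (matrix_inv R)" "invertible R" using pos_def_inverse R by blast+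
  have SS: "S ** S = matrix_inv R" "invertible S"
    using pos_def_msqrt[OF Ri(1)] pos_def_inverse unfolding S_def by blast+
  have sqrtR: "msqrt R = matrix_inv S"
    using msqrt_matrix_inv[OF Ri(1)] matrix_inv_matrix_inv[OF Ri(2)] unfolding S_def by simp
  have SRS: "S ** R ** S = mat 1"
    using matrix_inv_square_sandwich[OF SS(2)] matrix_inv_matrix_inv[OF Ri(2)] SS(1) by simp
  have "geo_mean (matrix_inv R) Q ** R ** geo_mean (matrix_inv R) P
      = S ** MQ ** (S ** R ** S) ** MP ** S"
    unfolding geo_mean_def Let_def S_def[symmetric] MP_def[symmetric] MQ_def[symmetric]
    by (simp add: matrix_mul_assoc)
  also have "\<dots> = S ** (MQ ** MP ** S)" using SRS by (simp add: matrix_mul_assoc)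
  finally have "trace (geo_mean (matrix_inv R) Q ** R ** geo_mean (matrix_inv R) P)
      = trace (MQ ** MP ** S ** S)"
    using trace_mul_sym[of S "MQ ** MP ** S"] by (simp add: matrix_mul_assoc)
  also have "\<dots> = trace (MQ ** (MP ** matrix_inv R))" using SS(1) by (simp add: matrix_mul_assoc[symmetric])
  also have "\<dots> = trace (MP ** matrix_inv R ** MQ)" by (rule trace_mul_sym)
  also have "\<dots> = gen_fidelity R P Q"
    unfolding gen_fidelity_def Let_def sqrtR MP_def MQ_def ..
  finally show ?thesis .
qed

theorem theorem1:
  fixes P Q R :: "complex^'d^'d"
  assumes "pos_def P" and "pos_def Q" and "pos_def R"
  shows "gen_bures R P Q = complex_of_real ((bw_norm R (bw_log R P - bw_log R Q))\<^sup>2)"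
proof -
  define G where "G X = geo_mean (matrix_inv R) X" for X
  have Ri: "pos_def (matrix_inv R)" "invertible R" using pos_def_inverse assms(3) by blast+
  have herm: "hermitian (G P)" "hermitian (G Q)"
    using pos_def_hermitian pos_def_geo_mean Ri(1) assms unfolding G_def by blast+
  have riccati: "G X ** R ** G X = X" if "pos_def X" for X
    using geo_mean_riccati[OF Ri(1) that] matrix_inv_matrix_inv[OF Ri(2)] by (simp add: G_def)
  have "complex_of_real ((bw_norm R (bw_log R P - bw_log R Q))\<^sup>2)
      = trace ((G P - G Q) ** R ** (G P - G Q))"
    unfolding bw_log_def lyap_inv_diff G_def[symmetric]
    using bw_norm_lyap_inv[OF assms(3) hermitian_diff[OF herm]] by simp
  also have "\<dots> = trace (G P ** R ** G P) + trace (G Q ** R ** G Q)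
      - 2 * complex_of_real (Re (trace (G Q ** R ** G P)))"
    using trace_congruence_diff[OF herm pos_def_hermitian[OF assms(3)]] .
  also have "\<dots> = gen_bures R P Q"
    unfolding gen_bures_def trace_add riccati[OF assms(1)] riccati[OF assms(2)]
    unfolding G_def trace_geo_mean_eq_gen_fidelity[OF assms(3)] ..
  finally show ?thesis by simp
qed

end
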